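(* For $\tau$ in the upper half plane, with $q^s=e^{2\pi i s\tau}$ and $\eta=\eta(\tau)$: $$\theta_3(0|6\tau)\theta_3(\tau|6\tau)-\theta_2(0|6\tau)\theta_2(\tau|6\tau)=q^{-1/12}\eta^2,$$ $$\theta_3(0|\tfrac{\tau}{6})\theta_3(\tfrac16|\tfrac{\tau}{6})-\theta_4(0|\tfrac{\tau}{6})\theta_4(\tfrac16|\tfrac{\tau}{6})=6\eta^2,$$ $$\theta_3(0|\tfrac{2\tau}{3})\theta_2(\tfrac13|\tfrac{2\tau}{3})+\theta_2(0|\tfrac{2\tau}{3})\theta_3(\tfrac13|\tfrac{2\tau}{3})=3\eta^2,$$ $$\theta_3(0|\tfrac{3\tau}{2})\theta_4(\tau|\tfrac{3\tau}{2})-\theta_4(0|\tfrac{3\tau}{2})\theta_3(\tau|\tfrac{3\tau}{2})=-2q^{-1/3}\eta^2.$$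
   Context: With $q^s=e^{2\pi i s\tau}$, $y^s=e^{2\pi i s z}$: $\theta_2(z|\tau)=\sum_{n\in\mathbb{Z}} q^{(n+1/2)^2/2}y^{n+1/2}$, $\theta_3(z|\tau)=\sum_{n} q^{n^2/2}y^{n}$, $\theta_4(z|\tau)=\sum_{n}(-1)^n q^{n^2/2}y^{n}$; $\eta(\tau)=q^{1/24}\prod_{n\ge1}(1-q^n)$. *)

theory Defs
  imports "HOL-Analysis.Analysis"
begin

definition qpow :: "real \<Rightarrow> complex \<Rightarrow> complex" where
  "qpow s \<tau> = exp (2 * of_real pi * \<i> * of_real s * \<tau>)"

definition theta2 :: "complex \<Rightarrow> complex \<Rightarrow> complex" where
  "theta2 z \<tau> = (\<Sum>\<^sub>\<infinity> n::int. qpow ((real_of_int n + 1/2)^2 / 2) \<tau> * qpow (real_of_int n + 1/2) z)"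

definition theta3 :: "complex \<Rightarrow> complex \<Rightarrow> complex" where
  "theta3 z \<tau> = (\<Sum>\<^sub>\<infinity> n::int. qpow ((real_of_int n)^2 / 2) \<tau> * qpow (real_of_int n) z)"

definition theta4 :: "complex \<Rightarrow> complex \<Rightarrow> complex" where
  "theta4 z \<tau> = (\<Sum>\<^sub>\<infinity> n::int. (-1) powi n * qpow ((real_of_int n)^2 / 2) \<tau> * qpow (real_of_int n) z)"

definition dedekind_eta :: "complex \<Rightarrow> complex" where
  "dedekind_eta \<tau> = qpow (1/24) \<tau> * (\<Prod>n. (1 - qpow (real (Suc n)) \<tau>))"

end

theory Submission
  imports Defs
begin

text \<open>
  Write e(a) = exp(2 pi i a). Each theta series is a sum of terms e(a) q^b over n in Z, so a product
  of two theta functions is a double series over Z^2. The lattice Z^2 is the disjoint union of the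
  images of (x, y) |-> (x + y, x - y) and (x, y) |-> (x + y + 1, x - y); after this change of
  variables the two products in each identity become the even and the odd part of one double series,
  which is recognised as eta^2 through Euler's pentagonal number theorem in the form
  eta = sum_k (-1)^k q^((6k+1)^2/24). In the second and fourth identities the two products cancel on
  one parity class. The second and third identities lead to the twisted series
  sum_s e(sigma s/6) q^((2s+1)^2/24) with sigma odd, which splitting s modulo 3 identifies with
  (1 + e(-sigma/6)) eta; the constant 3 comes from (1 + e(-1/6)) (1 + e(1/6)) = 3. Euler's theorem itself is the limit of Shanks' finite identity.
\<close>

section \<open>Euler's pentagonal number theorem\<close>

definition triangular :: "nat \<Rightarrow> nat" where
  "triangular k = k * (k + 1) div 2"

lemma triangular_0 [simp]: "triangular 0 = 0"
  by (simp add: triangular_def)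

lemma triangular_Suc [simp]: "triangular (Suc k) = triangular k + Suc k"
  unfolding triangular_def by (induction k) auto

lemma double_triangular: "2 * int (triangular n) = int n * (int n + 1)"
proof -
  have "2 * triangular n = n * (n + 1)"
    unfolding triangular_def by simp
  then show ?thesis
    by (metis of_nat_1 of_nat_add of_nat_mult of_nat_numeral)
qed

text \<open>
  Shanks' finite form of Euler's identity: \<open>shanks_sum x n n\<close> is both the symmetric partial sum
  \<open>|k| \<le> n\<close> of the pentagonal series and the partial product \<open>\<Prod>i<n. 1 - x ^ Suc i\<close> up to terms
  of order \<open>n |x|^n\<close>.
\<close>

definition shanks_prod :: "'a::comm_ring_1 \<Rightarrow> nat \<Rightarrow> nat \<Rightarrow> 'a" where
  "shanks_prod x n k = (\<Prod>i\<in>{Suc k..n}. 1 - x ^ i)"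

definition shanks_sum :: "'a::comm_ring_1 \<Rightarrow> nat \<Rightarrow> nat \<Rightarrow> 'a" where
  "shanks_sum x n m = (\<Sum>k\<le>n. (-1) ^ k * x ^ (m * k + triangular k) * shanks_prod x n k)"

lemma shanks_prod_same [simp]: "shanks_prod x n n = 1"
  by (simp add: shanks_prod_def)

lemma shanks_prod_Suc: "k \<le> n \<Longrightarrow> shanks_prod x (Suc n) k = shanks_prod x n k * (1 - x ^ Suc n)"
  unfolding shanks_prod_def by (subst prod.nat_ivl_Suc') auto

lemma shanks_sum_0 [simp]: "shanks_sum x 0 m = 1"
  by (simp add: shanks_sum_def)

lemma shanks_sum_Suc:
  "shanks_sum x (Suc n) m = (1 - x ^ Suc n) * shanks_sum x n m + (-1) ^ Suc n * x ^ (m * Suc n + triangular (Suc n))"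
proof -
  have "(\<Sum>k\<le>n. (-1) ^ k * x ^ (m * k + triangular k) * shanks_prod x (Suc n) k) = (1 - x ^ Suc n) * shanks_sum x n m"
    unfolding shanks_sum_def sum_distrib_left by (intro sum.cong) (auto simp: shanks_prod_Suc)
  then show ?thesis
    by (simp add: shanks_sum_def)
qed

lemma shanks_sum_shift:
  "shanks_sum x n m = (1 - x ^ Suc m) * shanks_sum x n (Suc m) + (-1) ^ n * x ^ (Suc m * Suc n + triangular n)"
proof (induction n arbitrary: m)
  case (Suc n)
  define a b p s where "a = x ^ Suc n" and "b = x ^ Suc m"
    and "p = x ^ (Suc m * Suc n + triangular n)" and "s = (-1 :: 'a) ^ n"
  have "m * Suc n + triangular (Suc n) = Suc m * Suc n + triangular n"
    by simp
  then have m: "shanks_sum x (Suc n) m = (1 - a) * ((1 - b) * shanks_sum x n (Suc m) + s * p) - s * p"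
    by (simp only: shanks_sum_Suc Suc.IH[of m] a_def b_def p_def s_def) simp
  have "Suc m * Suc n + triangular (Suc n) = (Suc m * Suc n + triangular n) + Suc n"
    by simp
  then have Suc_m: "shanks_sum x (Suc n) (Suc m) = (1 - a) * shanks_sum x n (Suc m) - s * (p * a)"
    unfolding shanks_sum_Suc a_def p_def s_def by (simp only: power_add) simp
  have "Suc m * Suc (Suc n) + triangular (Suc n) = (Suc m * Suc n + triangular n) + Suc n + Suc m"
    by simp
  then have pab: "x ^ (Suc m * Suc (Suc n) + triangular (Suc n)) = p * a * b"
    unfolding a_def b_def p_def by (simp only: power_add)
  show ?case
    unfolding m Suc_m pab power_Suc[of "-1"] b_def[symmetric] s_def[symmetric] by (simp add: algebra_simps)
qed simp

lemma shanks_sum_diag_Suc: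
  "shanks_sum x (Suc n) (Suc n) = shanks_sum x n n
     + (-1) ^ Suc n * (x ^ (Suc n * Suc n + triangular (Suc n)) + x ^ (Suc n * Suc n + triangular n))"
proof -
  define Y c s where "Y = shanks_sum x n (Suc n)" and "c = 1 - x ^ Suc n" and "s = (-1 :: 'a) ^ n"
  define p1 p2 where "p1 = x ^ (Suc n * Suc n + triangular (Suc n))" and "p2 = x ^ (Suc n * Suc n + triangular n)"
  have "shanks_sum x (Suc n) (Suc n) = c * Y - s * p1"
    unfolding shanks_sum_Suc Y_def c_def s_def p1_def by simp
  moreover have "shanks_sum x n n = c * Y + s * p2"
    unfolding shanks_sum_shift[of x n n] Y_def c_def s_def p2_def ..
  ultimately show ?thesis
    unfolding p1_def[symmetric] p2_def[symmetric] power_Suc[of "-1"] s_def[symmetric]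
    by (simp add: algebra_simps)
qed

lemma norm_shanks_prod_le:
  fixes x :: "'a::real_normed_field"
  assumes "norm x < 1"
  shows "norm (shanks_prod x n k) \<le> exp (1 / (1 - norm x))"
proof -
  have "norm (shanks_prod x n k) \<le> (\<Prod>i\<in>{Suc k..n}. exp (norm x ^ i))"
    unfolding shanks_prod_def
  proof (rule order.trans[OF norm_prod_le prod_mono], safe)
    fix i
    have "norm (1 - x ^ i) \<le> 1 + norm x ^ i"
      using norm_triangle_ineq4[of 1 "x ^ i"] by (simp add: norm_power)
    also have "\<dots> \<le> exp (norm x ^ i)"
      by (rule exp_ge_add_one_self)
    finally show "norm (1 - x ^ i) \<le> exp (norm x ^ i)" .
  qed simp
  also have "\<dots> = exp (\<Sum>i\<in>{Suc k..n}. norm x ^ i)"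
    by (simp add: exp_sum)
  also have "(\<Sum>i\<in>{Suc k..n}. norm x ^ i) \<le> (\<Sum>i. norm x ^ i)"
    using assms by (intro sum_le_suminf summable_geometric) auto
  also have "(\<Sum>i. norm x ^ i) = 1 / (1 - norm x)"
    using assms by (simp add: suminf_geometric)
  finally show ?thesis
    by simp
qed

lemma shanks_sum_diag_eq:
  "shanks_sum x n n = (\<Prod>i<n. 1 - x ^ Suc i)
     + (\<Sum>k<n. (-1) ^ Suc k * x ^ (n * Suc k + triangular (Suc k)) * shanks_prod x n (Suc k))"
proof -
  have "shanks_prod x n 0 = (\<Prod>i<n. 1 - x ^ Suc i)"
    unfolding shanks_prod_def by (simp add: prod.atLeast1_atMost_eq)
  then show ?thesis
    unfolding shanks_sum_def by (subst sum.atMost_shift) simp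
qed

lemma shanks_sum_diag_tendsto:
  fixes x :: "'a::{real_normed_field, banach}"
  assumes x: "norm x < 1"
  shows "(\<lambda>n. shanks_sum x n n) \<longlonglongrightarrow> (\<Prod>i. 1 - x ^ Suc i)"
proof -
  define B where "B = exp (1 / (1 - norm x))"
  define tail where "tail n = (\<Sum>k<n. (-1) ^ Suc k * x ^ (n * Suc k + triangular (Suc k)) * shanks_prod x n (Suc k))" for n
  have "\<forall>n. norm (tail n) \<le> B * (real n * norm x ^ n)"
  proof
    fix n
    have "norm (tail n) \<le> (\<Sum>k<n. norm x ^ n * B)"
      unfolding tail_def
    proof (rule order.trans[OF norm_sum sum_mono])
      fix k
      have "norm x ^ (n * Suc k + triangular (Suc k)) \<le> norm x ^ n"
        using x by (intro power_decreasing) auto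
      moreover have "norm (shanks_prod x n (Suc k)) \<le> B"
        unfolding B_def using x by (rule norm_shanks_prod_le)
      ultimately show "norm ((-1) ^ Suc k * x ^ (n * Suc k + triangular (Suc k)) * shanks_prod x n (Suc k))
          \<le> norm x ^ n * B"
        by (auto simp: norm_mult norm_power intro: mult_mono)
    qed
    then show "norm (tail n) \<le> B * (real n * norm x ^ n)"
      by (simp add: mult_ac)
  qed
  moreover have "(\<lambda>n. B * (real n * norm x ^ n)) \<longlonglongrightarrow> 0"
    using x by (intro tendsto_mult_right_zero powser_times_n_limit_0) simp
  ultimately have tail: "tail \<longlonglongrightarrow> 0"
    by (rule Lim_null_comparison[OF always_eventually])
  have "convergent_prod (\<lambda>i. 1 - x ^ Suc i)"
    using x by (intro abs_convergent_prod_imp_convergent_prod summable_imp_abs_convergent_prod)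
      (simp add: norm_mult norm_power summable_geometric)
  then have "(\<lambda>n. \<Prod>i<n. 1 - x ^ Suc i) \<longlonglongrightarrow> (\<Prod>i. 1 - x ^ Suc i)"
    by (simp add: LIMSEQ_lessThan_iff_atMost convergent_prod_LIMSEQ)
  from tendsto_add[OF this tail] show ?thesis
    by (simp add: shanks_sum_diag_eq tail_def)
qed

definition pentagonal :: "int \<Rightarrow> nat" where
  "pentagonal k = nat (k * (3 * k + 1) div 2)"

lemma pentagonal_doubled: "2 * int (pentagonal k) = k * (3 * k + 1)"
proof -
  have "0 \<le> k * (3 * k + 1)"
    by (cases "k \<ge> 0") (auto intro: mult_nonpos_nonpos)
  moreover have "even (k * (3 * k + 1))"
    by simp
  ultimately show ?thesis
    unfolding pentagonal_def by simp
qed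

lemma of_int_pentagonal: "real (pentagonal k) = of_int k * (3 * of_int k + 1) / 2"
  using arg_cong[OF pentagonal_doubled[of k], of real_of_int] by simp

lemma pentagonal_Suc: "pentagonal (int (Suc n)) = Suc n * Suc n + triangular (Suc n)"
proof -
  have "2 * int (pentagonal (int (Suc n))) = 2 * int (Suc n * Suc n + triangular (Suc n))"
    unfolding of_nat_add of_nat_mult distrib_left pentagonal_doubled double_triangular
    by (simp add: algebra_simps)
  then show ?thesis
    by (metis mult_left_cancel of_nat_eq_iff zero_neq_numeral)
qed

lemma pentagonal_minus_Suc: "pentagonal (- int (Suc n)) = Suc n * Suc n + triangular n"
proof -
  have "2 * int (pentagonal (- int (Suc n))) = 2 * int (Suc n * Suc n + triangular n)"
    unfolding of_nat_add of_nat_mult distrib_left pentagonal_doubled double_triangular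
    by (simp add: algebra_simps)
  then show ?thesis
    by (metis mult_left_cancel of_nat_eq_iff zero_neq_numeral)
qed

lemma abs_le_pentagonal: "nat \<bar>k\<bar> \<le> pentagonal k"
proof -
  have "2 * \<bar>k\<bar> \<le> k * (3 * k + 1)"
  proof (cases "k \<ge> 0")
    case True
    then have "0 \<le> k * (3 * k - 1)"
      by (cases "k = 0") auto
    with True show ?thesis
      by (simp add: algebra_simps)
  next
    case False
    then have "0 \<le> k * (k + 1)"
      by (intro mult_nonpos_nonpos) auto
    with False show ?thesis
      by (simp add: algebra_simps)
  qed
  then show ?thesis
    using pentagonal_doubled[of k] by simp
qed

lemma sum_pentagonal_eq_shanks_sum:
  fixes x :: "'a::field"
  shows "(\<Sum>k\<in>{- int n..int n}. (-1) powi k * x ^ pentagonal k) = shanks_sum x n n"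
proof (induction n)
  case (Suc n)
  let ?f = "\<lambda>k. (-1) powi k * x ^ pentagonal k"
  have ivl: "{- int (Suc n)..int (Suc n)} = insert (- int (Suc n)) (insert (int (Suc n)) {- int n..int n})"
    by auto
  have "(\<Sum>k\<in>{- int (Suc n)..int (Suc n)}. ?f k) = ?f (- int (Suc n)) + (?f (int (Suc n)) + shanks_sum x n n)"
    unfolding ivl by (subst sum.insert; simp add: Suc.IH)+
  also have "\<dots> = shanks_sum x (Suc n) (Suc n)"
    unfolding shanks_sum_diag_Suc pentagonal_Suc pentagonal_minus_Suc power_int_minus_one_minus power_int_of_nat
    by (simp add: algebra_simps)
  finally show ?case .
qed (simp add: pentagonal_def)

lemma summable_on_int_geometric:
  fixes r :: real
  assumes "0 \<le> r" "r < 1"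
  shows "(\<lambda>k::int. r ^ nat \<bar>k\<bar>) summable_on UNIV"
proof -
  have geom: "(\<lambda>n::nat. r ^ n) summable_on UNIV"
    using assms by (simp add: summable_on_UNIV_nonneg_real_iff summable_geometric)
  have "(\<lambda>k::int. r ^ nat \<bar>k\<bar>) summable_on (range int \<union> range (\<lambda>n. - int n))"
    using geom by (intro summable_on_union) (subst summable_on_reindex; simp add: o_def inj_on_def)+
  also have "range int \<union> range (\<lambda>n. - int n) = UNIV"
  proof -
    have "k \<in> range int \<union> range (\<lambda>n. - int n)" for k :: int
      by (cases "k \<ge> 0") (auto intro: range_eqI[of _ _ "nat \<bar>k\<bar>"])
    then show ?thesis
      by blast
  qed
  finally show ?thesis .
qed

lemma filterlim_int_symmetric_intervals:
  "filterlim (\<lambda>n::nat. {- int n..int n}) (finite_subsets_at_top UNIV) sequentially"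
  unfolding filterlim_finite_subsets_at_top
proof (intro allI impI)
  fix X :: "int set"
  assume "finite X \<and> X \<subseteq> UNIV"
  then obtain M where M: "\<forall>k\<in>X. \<bar>k\<bar> \<le> M"
    using bdd_above_finite[of "abs ` X"] unfolding bdd_above_def by auto
  show "\<forall>\<^sub>F n in sequentially. finite {- int n..int n} \<and> X \<subseteq> {- int n..int n} \<and> {- int n..int n} \<subseteq> UNIV"
    using eventually_ge_at_top[of "nat M"] by eventually_elim (use M in force)
qed

theorem euler_pentagonal:
  fixes x :: "'a::{real_normed_field, banach}"
  assumes x: "norm x < 1"
  shows "((\<lambda>k. (-1) powi k * x ^ pentagonal k) has_sum (\<Prod>n. 1 - x ^ Suc n)) UNIV"
proof -
  define f where "f k = (-1) powi k * x ^ pentagonal k" for k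
  have "(\<lambda>k. norm (f k)) summable_on UNIV"
  proof (rule summable_on_comparison_test)
    show "(\<lambda>k::int. norm x ^ nat \<bar>k\<bar>) summable_on UNIV"
      using x by (intro summable_on_int_geometric) auto
    show "norm (f k) \<le> norm x ^ nat \<bar>k\<bar>" for k
    proof -
      have "norm (f k) = norm x ^ pentagonal k"
        unfolding f_def by (simp add: norm_mult norm_power norm_power_int)
      also have "\<dots> \<le> norm x ^ nat \<bar>k\<bar>"
        using x by (intro power_decreasing abs_le_pentagonal) auto
      finally show ?thesis .
    qed
  qed simp
  then have "(f has_sum infsum f UNIV) UNIV"
    by (rule has_sum_infsum[OF abs_summable_summable])
  then have "(\<lambda>n. \<Sum>k\<in>{- int n..int n}. f k) \<longlonglongrightarrow> infsum f UNIV"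
    unfolding has_sum_def by (rule filterlim_compose[OF _ filterlim_int_symmetric_intervals])
  moreover have "(\<lambda>n. \<Sum>k\<in>{- int n..int n}. f k) \<longlonglongrightarrow> (\<Prod>n. 1 - x ^ Suc n)"
    unfolding f_def sum_pentagonal_eq_shanks_sum using x by (rule shanks_sum_diag_tendsto)
  ultimately have "infsum f UNIV = (\<Prod>n. 1 - x ^ Suc n)"
    by (rule LIMSEQ_unique)
  with \<open>(f has_sum infsum f UNIV) UNIV\<close> show ?thesis
    unfolding f_def by simp
qed

section \<open>Summation over the integers\<close>

lemma has_sum_product:
  fixes f g :: "_ \<Rightarrow> complex"
  assumes f: "(f has_sum a) A" and g: "(g has_sum b) B"
  shows "((\<lambda>(x, y). f x * g y) has_sum a * b) (A \<times> B)"
proof (rule has_sum_SigmaI)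
  show "((\<lambda>y. case (x, y) of (x, y) \<Rightarrow> f x * g y) has_sum f x * b) B" for x
    using has_sum_cmult_right[OF g] by simp
  show "((\<lambda>x. f x * b) has_sum a * b) A"
    using f by (rule has_sum_cmult_left)
  have nf: "(\<lambda>x. norm (f x)) summable_on A" and ng: "(\<lambda>y. norm (g y)) summable_on B"
    using f g summable_on_iff_abs_summable_on_complex by (auto simp: summable_on_def)
  have "(\<lambda>(x, y). norm (f x) * norm (g y)) summable_on A \<times> B"
  proof (rule summable_on_SigmaI)
    show "((\<lambda>y. case (x, y) of (x, y) \<Rightarrow> norm (f x) * norm (g y)) has_sum norm (f x) * infsum (\<lambda>y. norm (g y)) B) B" for x
      using has_sum_cmult_right[OF has_sum_infsum[OF ng]] by simp
    show "(\<lambda>x. norm (f x) * infsum (\<lambda>y. norm (g y)) B) summable_on A"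
      using nf by (rule summable_on_cmult_left)
  qed auto
  then show "(\<lambda>(x, y). f x * g y) summable_on A \<times> B"
    by (simp add: summable_on_iff_abs_summable_on_complex case_prod_unfold norm_mult)
qed

lemma has_sum_product_diff:
  fixes f g f' g' :: "_ \<Rightarrow> complex"
  assumes "(f has_sum a) A" "(g has_sum b) B" "(f' has_sum a') A" "(g' has_sum b') B"
  shows "((\<lambda>(x, y). f x * g y - f' x * g' y) has_sum a * b - a' * b') (A \<times> B)"
  using has_sum_add[OF has_sum_product[OF assms(1,2)] has_sum_uminusI[OF has_sum_product[OF assms(3,4)]]]
  by (simp add: case_prod_unfold)

lemma has_sum_int_pairs_parity_split:
  fixes f :: "int \<times> int \<Rightarrow> 'a::topological_comm_monoid_add"
  assumes "((\<lambda>(x, y). f (x + y, x - y)) has_sum s) UNIV"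
    and "((\<lambda>(x, y). f (x + y + 1, x - y)) has_sum s') UNIV"
  shows "(f has_sum s + s') UNIV"
proof -
  define ev od where "ev = (\<lambda>(x, y). (x + y, x - y :: int))" and "od = (\<lambda>(x, y). (x + y + 1, x - y :: int))"
  have "(f has_sum s) (range ev)" "(f has_sum s') (range od)"
    using assms by (subst has_sum_reindex; force simp: ev_def od_def inj_on_def o_def case_prod_unfold)+
  then have "(f has_sum s + s') (range ev \<union> range od)"
    by (rule has_sum_Un_disjoint) (auto simp: ev_def od_def, presburger)
  also have "range ev \<union> range od = UNIV"
  proof -
    have "(a, b) \<in> range ev \<union> range od" for a b
    proof (cases "even (a + b)")
      case True
      then have "(a, b) = ev ((a + b) div 2, (a - b) div 2)"
        unfolding ev_def by simp presburger
      then show ?thesis by blast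
    next
      case False
      then have "(a, b) = od ((a + b) div 2, (a - b) div 2)"
        unfolding od_def by simp presburger
      then show ?thesis by blast
    qed
    then show ?thesis
      by auto
  qed
  finally show ?thesis .
qed

lemma has_sum_int_pairs_odd:
  fixes f :: "int \<times> int \<Rightarrow> 'a::topological_comm_monoid_add"
  assumes "\<And>x y. f (x + y, x - y) = 0"
    and "((\<lambda>(x, y). f (x + y + 1, x - y)) has_sum s) UNIV"
  shows "(f has_sum s) UNIV"
proof -
  have "((\<lambda>(x, y). f (x + y, x - y)) has_sum 0) UNIV"
    by (rule has_sum_0) (auto simp: assms(1))
  from has_sum_int_pairs_parity_split[OF this assms(2)] show ?thesis
    by simp
qed

lemma has_sum_int_residues:
  fixes f :: "int \<Rightarrow> 'a::topological_comm_monoid_add"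
  assumes "m > 0" and "\<And>r. r \<in> {0..<m} \<Longrightarrow> ((\<lambda>k. f (m * k + r)) has_sum s r) UNIV"
  shows "(f has_sum (\<Sum>r\<in>{0..<m}. s r)) UNIV"
proof -
  have "(f has_sum (\<Sum>r\<in>{0..<m}. s r)) (\<Union>r\<in>{0..<m}. range (\<lambda>k. m * k + r))"
  proof (rule sum_has_sum)
    show "(f has_sum s r) (range (\<lambda>k. m * k + r))" if "r \<in> {0..<m}" for r
      using assms that by (subst has_sum_reindex) (auto simp: inj_on_def o_def)
    show "range (\<lambda>k. m * k + r) \<inter> range (\<lambda>k. m * k + r') = {}"
      if "r \<in> {0..<m}" "r' \<in> {0..<m}" "r \<noteq> r'" for r r'
    proof -
      have "(m * k + r) mod m = r" "(m * k + r') mod m = r'" for k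
        using that by (simp_all add: mod_pos_pos_trivial)
      with \<open>r \<noteq> r'\<close> show ?thesis
        by (auto dest: arg_cong[where f = "\<lambda>n. n mod m"])
    qed
  qed simp
  also have "(\<Union>r\<in>{0..<m}. range (\<lambda>k. m * k + r)) = UNIV"
  proof -
    have "n \<in> range (\<lambda>k. m * k + n mod m)" for n
      by (rule range_eqI[of _ _ "n div m"]) simp
    then show ?thesis
      using assms(1) by fastforce
  qed
  finally show ?thesis .
qed

lemma has_sum_int_mod_3:
  fixes f :: "int \<Rightarrow> 'a::topological_comm_monoid_add"
  assumes "((\<lambda>k. f (3 * k)) has_sum s0) UNIV" "((\<lambda>k. f (3 * k + 1)) has_sum s1) UNIV"
    and "((\<lambda>k. f (3 * k + 2)) has_sum s2) UNIV"
  shows "(f has_sum s0 + s1 + s2) UNIV"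
proof -
  have "(f has_sum (\<Sum>r\<in>{0..<3}. [s0, s1, s2] ! nat r)) UNIV"
  proof (rule has_sum_int_residues)
    fix r :: int
    assume "r \<in> {0..<3}"
    then consider "r = 0" | "r = 1" | "r = 2"
      by force
    then show "((\<lambda>k. f (3 * k + r)) has_sum [s0, s1, s2] ! nat r) UNIV"
      by cases (use assms in simp_all)
  qed simp
  also have "{0..<3::int} = {0, 1, 2}"
    by auto
  finally show ?thesis
    by (simp add: add.assoc)
qed

lemma has_sum_int_antisymmetric:
  fixes g :: "int \<Rightarrow> 'a::real_normed_vector"
  assumes "g summable_on UNIV" and "\<And>k. g (- k - 1) = - g k"
  shows "(g has_sum 0) UNIV"
proof -
  have S: "(g has_sum infsum g UNIV) UNIV"
    using assms(1) by (rule has_sum_infsum)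
  then have "((\<lambda>k. g (- k - 1)) has_sum infsum g UNIV) UNIV"
    by (subst has_sum_reindex_bij_witness[where j = "\<lambda>k. - k - 1" and i = "\<lambda>k. - k - 1"]) auto
  then have "(g has_sum - infsum g UNIV) UNIV"
    unfolding assms(2) by (simp only: has_sum_uminus)
  with S have "infsum g UNIV = - infsum g UNIV"
    by (rule has_sum_unique)
  then have "2 *\<^sub>R infsum g UNIV = 0"
    by (metis add.right_inverse scaleR_2)
  with S show ?thesis
    by simp
qed

lemma quadratic_ge_linear:
  fixes a b n :: real
  assumes "a > 0"
  shows "a * \<bar>n\<bar> - (a + \<bar>b\<bar>)\<^sup>2 / (4 * a) \<le> a * n\<^sup>2 + b * n"
proof -
  have "0 \<le> a * (\<bar>n\<bar> - (a + \<bar>b\<bar>) / (2 * a))\<^sup>2"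
    using assms by simp
  also have "\<dots> = a * n\<^sup>2 - (a + \<bar>b\<bar>) * \<bar>n\<bar> + (a + \<bar>b\<bar>)\<^sup>2 / (4 * a)"
    using assms by (simp add: power2_eq_square field_simps)
  moreover have "- \<bar>b\<bar> * \<bar>n\<bar> \<le> b * n"
    by (simp add: abs_mult[symmetric])
  ultimately show ?thesis
    by (simp add: algebra_simps)
qed

lemma summable_on_exp_quadratic:
  fixes a b :: real
  assumes "a > 0"
  shows "(\<lambda>n::int. exp (- (a * of_int n ^ 2 + b * of_int n))) summable_on UNIV"
proof (rule summable_on_comparison_test)
  define K where "K = (a + \<bar>b\<bar>)\<^sup>2 / (4 * a)"
  show "(\<lambda>n::int. exp K * exp (- a) ^ nat \<bar>n\<bar>) summable_on UNIV"
    using assms by (intro summable_on_cmult_right summable_on_int_geometric) auto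
  show "exp (- (a * of_int n ^ 2 + b * of_int n)) \<le> exp K * exp (- a) ^ nat \<bar>n\<bar>" for n :: int
  proof -
    have "exp (- (a * of_int n ^ 2 + b * of_int n)) \<le> exp (K - a * \<bar>of_int n\<bar>)"
      using quadratic_ge_linear[OF assms, of "of_int n" b] unfolding K_def by simp
    also have "\<dots> = exp K * exp (- a) ^ nat \<bar>n\<bar>"
      by (simp add: exp_diff exp_minus field_simps flip: exp_of_nat_mult)
    finally show ?thesis .
  qed
qed simp

section \<open>Theta series as sums of q-terms\<close>

text \<open>\<open>qterm a b \<tau>\<close> is \<open>e(a) q^b\<close>; all summands below are of this form.\<close>

definition qterm :: "real \<Rightarrow> real \<Rightarrow> complex \<Rightarrow> complex" where
  "qterm a b \<tau> = qpow a 1 * qpow b \<tau>"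

lemma qpow_add: "qpow a \<tau> * qpow b \<tau> = qpow (a + b) \<tau>"
  unfolding qpow_def exp_add[symmetric] by (simp add: algebra_simps)

lemma qterm_mult: "qterm a b \<tau> * qterm c d \<tau> = qterm (a + c) (b + d) \<tau>"
  unfolding qterm_def qpow_add[symmetric] by (simp only: mult_ac)

lemma qpow_mult_qterm: "qpow c \<tau> * qterm a b \<tau> = qterm a (c + b) \<tau>"
  unfolding qterm_def qpow_add[symmetric] by (simp only: mult_ac)

lemma qpow_1_mult_qterm: "qpow c 1 * qterm a b \<tau> = qterm (c + a) b \<tau>"
  unfolding qterm_def qpow_add[symmetric] by (simp only: mult_ac)

lemma qpow_of_int_1: "qpow (of_int k) 1 = 1"
proof -
  have "2 * complex_of_real pi * \<i> * complex_of_real (of_int k) * 1 = \<i> * (of_int k * (of_real pi * 2))"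
    by simp
  then show ?thesis
    unfolding qpow_def by (simp only: exp_2pi_1_int)
qed

lemma qpow_half_1: "qpow (1/2) 1 = -1"
  unfolding qpow_def by simp

lemma qterm_eqI: "a = a' + of_int k \<Longrightarrow> b = b' \<Longrightarrow> qterm a b \<tau> = qterm a' b' \<tau>"
  unfolding qterm_def by (simp add: qpow_add[symmetric] qpow_of_int_1)

lemma qterm_eq_uminusI: "a = a' + of_int k + 1/2 \<Longrightarrow> b = b' \<Longrightarrow> qterm a b \<tau> = - qterm a' b' \<tau>"
  unfolding qterm_def by (simp add: qpow_add[symmetric] qpow_of_int_1 qpow_half_1)

lemma norm_qterm: "norm (qterm a b \<tau>) = exp (- 2 * pi * b * Im \<tau>)"
  unfolding qterm_def qpow_def norm_mult by simp

lemma qpow_of_nat: "qpow (real m) \<tau> = qpow 1 \<tau> ^ m"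
  unfolding qpow_def by (simp add: exp_of_nat_mult[symmetric] algebra_simps)

lemma norm_qpow_1_less: "Im \<tau> > 0 \<Longrightarrow> norm (qpow 1 \<tau>) < 1"
  unfolding qpow_def by simp

lemma minus_one_powi_eq_qpow: "(-1) powi k = qpow (of_int k / 2) 1"
proof -
  have "(-1::complex) powi k = exp (of_real pi * \<i>) powi k"
    by simp
  also have "\<dots> = qpow (of_int k / 2) 1"
    unfolding qpow_def exp_power_int by (simp add: field_simps)
  finally show ?thesis .
qed

lemma summable_on_qterm_quadratic:
  assumes "Im \<tau> > 0" "A > 0"
    and "\<And>n. f n = qterm (\<alpha> n) (\<beta> n) \<tau>" "\<And>n. \<beta> n = A * of_int n ^ 2 + B * of_int n + C"
  shows "f summable_on UNIV"
proof (rule abs_summable_summable)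
  have "(\<lambda>n::int. exp (- 2 * pi * C * Im \<tau>) * exp (- ((2 * pi * A * Im \<tau>) * of_int n ^ 2 + (2 * pi * B * Im \<tau>) * of_int n)))
      summable_on UNIV"
    using assms by (intro summable_on_cmult_right summable_on_exp_quadratic) auto
  moreover have "norm (f n)
      = exp (- 2 * pi * C * Im \<tau>) * exp (- ((2 * pi * A * Im \<tau>) * of_int n ^ 2 + (2 * pi * B * Im \<tau>) * of_int n))" for n
    unfolding assms(3) norm_qterm assms(4) mult_exp_exp by (simp add: algebra_simps)
  ultimately show "(\<lambda>n. norm (f n)) summable_on UNIV"
    by simp
qed

lemma has_sum_theta3:
  assumes "Im \<tau> > 0" "c > 0" "\<tau>' = of_real c * \<tau>" "z = of_real u + of_real v * \<tau>"
    and f: "\<And>n. f n = qterm (u * of_int n) (c / 2 * of_int n ^ 2 + v * of_int n) \<tau>"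
  shows "(f has_sum theta3 z \<tau>') UNIV"
proof -
  have "f summable_on UNIV"
    by (rule summable_on_qterm_quadratic[OF assms(1) _ f, where A = "c / 2" and B = v and C = 0])
      (use assms(2) in auto)
  moreover have "f = (\<lambda>n. qpow ((of_int n)\<^sup>2 / 2) \<tau>' * qpow (of_int n) z)"
    unfolding f qterm_def qpow_def mult_exp_exp assms(3,4)
    by (intro ext arg_cong[where f = exp]) (simp add: field_simps power2_eq_square)
  ultimately show ?thesis
    unfolding theta3_def using has_sum_infsum by blast
qed

lemma has_sum_theta2:
  assumes "Im \<tau> > 0" "c > 0" "\<tau>' = of_real c * \<tau>" "z = of_real u + of_real v * \<tau>"
    and f: "\<And>n. f n = qterm (u * (of_int n + 1/2)) (c / 2 * (of_int n + 1/2) ^ 2 + v * (of_int n + 1/2)) \<tau>"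
  shows "(f has_sum theta2 z \<tau>') UNIV"
proof -
  have "f summable_on UNIV"
    by (rule summable_on_qterm_quadratic[OF assms(1) _ f, where A = "c / 2" and B = "c / 2 + v" and C = "c / 8 + v / 2"])
      (use assms(2) in \<open>auto simp: power2_eq_square field_simps\<close>)
  moreover have "f = (\<lambda>n. qpow ((of_int n + 1/2)\<^sup>2 / 2) \<tau>' * qpow (of_int n + 1/2) z)"
    unfolding f qterm_def qpow_def mult_exp_exp assms(3,4)
    by (intro ext arg_cong[where f = exp]) (simp add: field_simps power2_eq_square)
  ultimately show ?thesis
    unfolding theta2_def using has_sum_infsum by blast
qed

lemma has_sum_theta4:
  assumes "Im \<tau> > 0" "c > 0" "\<tau>' = of_real c * \<tau>" "z = of_real u + of_real v * \<tau>"
    and f: "\<And>n. f n = qterm (of_int n / 2 + u * of_int n) (c / 2 * of_int n ^ 2 + v * of_int n) \<tau>"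
  shows "(f has_sum theta4 z \<tau>') UNIV"
proof -
  have "f summable_on UNIV"
    by (rule summable_on_qterm_quadratic[OF assms(1) _ f, where A = "c / 2" and B = v and C = 0])
      (use assms(2) in auto)
  moreover have "f = (\<lambda>n. (-1) powi n * qpow ((of_int n)\<^sup>2 / 2) \<tau>' * qpow (of_int n) z)"
    unfolding f minus_one_powi_eq_qpow qterm_def qpow_def mult_exp_exp assms(3,4)
    by (intro ext arg_cong[where f = exp]) (simp add: field_simps power2_eq_square)
  ultimately show ?thesis
    unfolding theta4_def using has_sum_infsum by blast
qed

section \<open>Series for the Dedekind eta function\<close>

lemma has_sum_dedekind_eta:
  assumes "Im \<tau> > 0"
  shows "((\<lambda>k. qterm (of_int k / 2) ((6 * of_int k + 1)\<^sup>2 / 24) \<tau>) has_sum dedekind_eta \<tau>) UNIV"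
proof -
  define x where "x = qpow 1 \<tau>"
  have "((\<lambda>k. (-1) powi k * x ^ pentagonal k) has_sum (\<Prod>n. 1 - x ^ Suc n)) UNIV"
    using norm_qpow_1_less[OF assms] unfolding x_def by (rule euler_pentagonal)
  from has_sum_cmult_right[OF this, of "qpow (1/24) \<tau>"]
  have "((\<lambda>k. qpow (1/24) \<tau> * ((-1) powi k * x ^ pentagonal k)) has_sum dedekind_eta \<tau>) UNIV"
    unfolding dedekind_eta_def x_def qpow_of_nat .
  moreover have "qpow (1/24) \<tau> * ((-1) powi k * x ^ pentagonal k) = qterm (of_int k / 2) ((6 * of_int k + 1)\<^sup>2 / 24) \<tau>" for k
    unfolding x_def qpow_of_nat[symmetric]
    unfolding minus_one_powi_eq_qpow of_int_pentagonal qterm_def qpow_def mult_exp_exp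
    by (intro arg_cong[where f = exp]) (simp add: field_simps power2_eq_square)
  ultimately show ?thesis
    by simp
qed

lemma has_sum_dedekind_eta_reflected:
  assumes "Im \<tau> > 0"
  shows "((\<lambda>k. qterm (- (of_int k + 1) / 2) ((6 * of_int k + 5)\<^sup>2 / 24) \<tau>) has_sum dedekind_eta \<tau>) UNIV"
proof -
  have "((\<lambda>k. qterm (of_int (- k - 1) / 2) ((6 * of_int (- k - 1) + 1)\<^sup>2 / 24) \<tau>) has_sum dedekind_eta \<tau>) UNIV"
    using has_sum_dedekind_eta[OF assms]
    by (subst has_sum_reindex_bij_witness[where j = "\<lambda>k. - k - 1" and i = "\<lambda>k. - k - 1"]) auto
  moreover have "qterm (of_int (- k - 1) / 2) ((6 * of_int (- k - 1) + 1)\<^sup>2 / 24) \<tau>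
      = qterm (- (of_int k + 1) / 2) ((6 * of_int k + 5)\<^sup>2 / 24) \<tau>" for k
    by (rule qterm_eqI[where k = 0]) (simp_all add: field_simps power2_eq_square)
  ultimately show ?thesis
    by simp
qed

lemma has_sum_dedekind_eta_squared:
  assumes "Im \<tau> > 0"
  shows "((\<lambda>(a, b). qterm (of_int a / 2 + of_int b / 2) ((6 * of_int a + 1)\<^sup>2 / 24 + (6 * of_int b + 1)\<^sup>2 / 24) \<tau>)
    has_sum (dedekind_eta \<tau>)\<^sup>2) UNIV"
  using has_sum_product[OF has_sum_dedekind_eta[OF assms] has_sum_dedekind_eta[OF assms]]
  by (simp add: qterm_mult power2_eq_square[of "dedekind_eta \<tau>"])

lemma has_sum_dedekind_eta_twisted:
  assumes \<tau>: "Im \<tau> > 0" and "odd \<sigma>"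
  shows "((\<lambda>s. qterm (of_int \<sigma> * of_int s / 6) ((2 * of_int s + 1)\<^sup>2 / 24) \<tau>)
    has_sum (1 + qpow (- of_int \<sigma> / 6) 1) * dedekind_eta \<tau>) UNIV"
proof -
  obtain j where j: "\<sigma> = 2 * j + 1"
    using \<open>odd \<sigma>\<close> by (rule oddE)
  define f where "f s = qterm (of_int \<sigma> * of_int s / 6) ((2 * of_int s + 1)\<^sup>2 / 24) \<tau>" for s :: int
  have r0: "((\<lambda>k. f (3 * k)) has_sum dedekind_eta \<tau>) UNIV"
  proof (rule has_sum_cong[THEN iffD1, OF _ has_sum_dedekind_eta[OF \<tau>]])
    show "qterm (of_int k / 2) ((6 * of_int k + 1)\<^sup>2 / 24) \<tau> = f (3 * k)" for k
      unfolding f_def by (rule qterm_eqI[where k = "- j * k"]) (simp_all add: j field_simps)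
  qed
  have r1: "((\<lambda>k. f (3 * k + 1)) has_sum 0) UNIV"
  proof (rule has_sum_int_antisymmetric)
    show "(\<lambda>k. f (3 * k + 1)) summable_on UNIV"
      unfolding f_def
      by (rule summable_on_qterm_quadratic[OF \<tau> _ refl, where A = "3/2" and B = "3/2" and C = "3/8"])
        (simp_all add: field_simps power2_eq_square)
    show "f (3 * (- k - 1) + 1) = - f (3 * k + 1)" for k
      unfolding f_def
      by (rule qterm_eq_uminusI[where k = "- 2 * j * k - j - k - 1"]) (simp_all add: j field_simps power2_eq_square)
  qed
  have r2: "((\<lambda>k. f (3 * k + 2)) has_sum qpow (- of_int \<sigma> / 6) 1 * dedekind_eta \<tau>) UNIV"
  proof (rule has_sum_cong[THEN iffD1, OF _ has_sum_cmult_right[OF has_sum_dedekind_eta_reflected[OF \<tau>]]])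
    show "qpow (- of_int \<sigma> / 6) 1 * qterm (- (of_int k + 1) / 2) ((6 * of_int k + 5)\<^sup>2 / 24) \<tau> = f (3 * k + 2)" for k
      unfolding f_def qpow_1_mult_qterm
      by (rule qterm_eqI[where k = "- (j + 1) * (k + 1)"]) (simp_all add: j field_simps power2_eq_square)
  qed
  from has_sum_int_mod_3[OF r0 r1 r2] show ?thesis
    unfolding f_def by (simp add: algebra_simps)
qed

lemma qpow_sixth_identity: "(1 + qpow (- 1 / 6) 1) * (1 + qpow (1 / 6) 1) = 3"
proof -
  have "qpow a 1 = cis (2 * pi * a)" for a
    unfolding qpow_def cis_conv_exp by (rule arg_cong[where f = exp]) simp
  then have a: "qpow (- 1 / 6) 1 = cis (- (pi / 3))" and b: "qpow (1 / 6) 1 = cis (pi / 3)"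
    by (simp_all add: field_simps)
  show ?thesis
    unfolding a b by (simp add: complex_eq_iff cos_60 sin_60 algebra_simps)
qed

lemma has_sum_dedekind_eta_squared_twisted:
  assumes "Im \<tau> > 0"
  shows "((\<lambda>(u, v). qterm (of_int u / 6 - of_int v / 6) ((2 * of_int u + 1)\<^sup>2 / 24 + (2 * of_int v + 1)\<^sup>2 / 24) \<tau>)
    has_sum 3 * (dedekind_eta \<tau>)\<^sup>2) UNIV"
proof -
  have "((\<lambda>(u, v). qterm (of_int u / 6) ((2 * of_int u + 1)\<^sup>2 / 24) \<tau> * qterm (- of_int v / 6) ((2 * of_int v + 1)\<^sup>2 / 24) \<tau>)
    has_sum (1 + qpow (- 1 / 6) 1) * dedekind_eta \<tau> * ((1 + qpow (1 / 6) 1) * dedekind_eta \<tau>)) UNIV"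
    using has_sum_product[OF has_sum_dedekind_eta_twisted[OF assms, of 1] has_sum_dedekind_eta_twisted[OF assms, of "-1"]]
    by simp
  moreover have "(1 + qpow (- 1 / 6) 1) * dedekind_eta \<tau> * ((1 + qpow (1 / 6) 1) * dedekind_eta \<tau>) = 3 * (dedekind_eta \<tau>)\<^sup>2"
    using qpow_sixth_identity by (simp add: power2_eq_square mult_ac)
  ultimately show ?thesis
    by (simp add: qterm_mult)
qed

lemma theta_6tau_eta_squared:
  assumes \<tau>: "Im \<tau> > 0"
  shows "theta3 0 (6 * \<tau>) * theta3 \<tau> (6 * \<tau>) - theta2 0 (6 * \<tau>) * theta2 \<tau> (6 * \<tau>)
    = qpow (-1/12) \<tau> * (dedekind_eta \<tau>)\<^sup>2"
proof -
  define G where "G = (\<lambda>(a::int, b::int). qpow (-1/12) \<tau> *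
    qterm (of_int a / 2 + of_int b / 2) ((6 * of_int a + 1)\<^sup>2 / 24 + (6 * of_int b + 1)\<^sup>2 / 24) \<tau>)"
  have eta: "(G has_sum qpow (-1/12) \<tau> * (dedekind_eta \<tau>)\<^sup>2) UNIV"
    unfolding G_def using has_sum_cmult_right[OF has_sum_dedekind_eta_squared[OF \<tau>]] by (simp add: case_prod_unfold)
  have "(G has_sum theta3 \<tau> (6 * \<tau>) * theta3 0 (6 * \<tau>) + - (theta2 \<tau> (6 * \<tau>) * theta2 0 (6 * \<tau>))) UNIV"
  proof (rule has_sum_int_pairs_parity_split)
    have s1: "((\<lambda>n. qterm 0 (3 * of_int n ^ 2 + of_int n) \<tau>) has_sum theta3 \<tau> (6 * \<tau>)) UNIV"
      by (rule has_sum_theta3[OF \<tau>, where c = 6 and u = 0 and v = 1]) simp_all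
    have s2: "((\<lambda>n. qterm 0 (3 * of_int n ^ 2) \<tau>) has_sum theta3 0 (6 * \<tau>)) UNIV"
      by (rule has_sum_theta3[OF \<tau>, where c = 6 and u = 0 and v = 0]) simp_all
    have "G (x + y, x - y) = qterm 0 (3 * of_int x ^ 2 + of_int x) \<tau> * qterm 0 (3 * of_int y ^ 2) \<tau>" for x y
      unfolding G_def prod.case qterm_mult qpow_mult_qterm
      by (rule qterm_eqI[where k = x]) (simp_all add: field_simps power2_eq_square)
    with has_sum_product[OF s1 s2]
    show "((\<lambda>(x, y). G (x + y, x - y)) has_sum theta3 \<tau> (6 * \<tau>) * theta3 0 (6 * \<tau>)) UNIV"
      by (simp add: case_prod_unfold)
    have s3: "((\<lambda>n. qterm 0 (3 * (of_int n + 1/2) ^ 2 + (of_int n + 1/2)) \<tau>) has_sum theta2 \<tau> (6 * \<tau>)) UNIV"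
      by (rule has_sum_theta2[OF \<tau>, where c = 6 and u = 0 and v = 1]) (simp_all add: field_simps)
    have s4: "((\<lambda>n. qterm 0 (3 * (of_int n + 1/2) ^ 2) \<tau>) has_sum theta2 0 (6 * \<tau>)) UNIV"
      by (rule has_sum_theta2[OF \<tau>, where c = 6 and u = 0 and v = 0]) (simp_all add: field_simps)
    have "G (x + y + 1, x - y) = - (qterm 0 (3 * (of_int x + 1/2) ^ 2 + (of_int x + 1/2)) \<tau> * qterm 0 (3 * (of_int y + 1/2) ^ 2) \<tau>)" for x y
      unfolding G_def prod.case qterm_mult qpow_mult_qterm
      by (rule qterm_eq_uminusI[where k = x]) (simp_all add: field_simps power2_eq_square)
    with has_sum_uminusI[OF has_sum_product[OF s3 s4]]
    show "((\<lambda>(x, y). G (x + y + 1, x - y)) has_sum - (theta2 \<tau> (6 * \<tau>) * theta2 0 (6 * \<tau>))) UNIV"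
      by (simp add: case_prod_unfold)
  qed
  from has_sum_unique[OF this eta] show ?thesis
    by (simp add: mult.commute)
qed

lemma theta_tau_div_6_eta_squared:
  assumes \<tau>: "Im \<tau> > 0"
  shows "theta3 0 (\<tau> / 6) * theta3 (1/6) (\<tau> / 6) - theta4 0 (\<tau> / 6) * theta4 (1/6) (\<tau> / 6)
    = 6 * (dedekind_eta \<tau>)\<^sup>2"
proof -
  have s1: "((\<lambda>n. qterm 0 (of_int n ^ 2 / 12) \<tau>) has_sum theta3 0 (\<tau> / 6)) UNIV"
    by (rule has_sum_theta3[OF \<tau>, where c = "1/6" and u = 0 and v = 0]) (simp_all add: field_simps)
  have s2: "((\<lambda>n. qterm (of_int n / 6) (of_int n ^ 2 / 12) \<tau>) has_sum theta3 (1/6) (\<tau> / 6)) UNIV"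
    by (rule has_sum_theta3[OF \<tau>, where c = "1/6" and u = "1/6" and v = 0]) (simp_all add: field_simps)
  have s3: "((\<lambda>n. qterm (of_int n / 2) (of_int n ^ 2 / 12) \<tau>) has_sum theta4 0 (\<tau> / 6)) UNIV"
    by (rule has_sum_theta4[OF \<tau>, where c = "1/6" and u = 0 and v = 0]) (simp_all add: field_simps)
  have s4: "((\<lambda>n. qterm (of_int n / 2 + of_int n / 6) (of_int n ^ 2 / 12) \<tau>) has_sum theta4 (1/6) (\<tau> / 6)) UNIV"
    by (rule has_sum_theta4[OF \<tau>, where c = "1/6" and u = "1/6" and v = 0]) (simp_all add: field_simps)
  define K where "K = (\<lambda>(n, m). qterm 0 (of_int n ^ 2 / 12) \<tau> * qterm (of_int m / 6) (of_int m ^ 2 / 12) \<tau>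
    - qterm (of_int n / 2) (of_int n ^ 2 / 12) \<tau> * qterm (of_int m / 2 + of_int m / 6) (of_int m ^ 2 / 12) \<tau>)"
  have lhs: "(K has_sum theta3 0 (\<tau> / 6) * theta3 (1/6) (\<tau> / 6) - theta4 0 (\<tau> / 6) * theta4 (1/6) (\<tau> / 6)) UNIV"
    using has_sum_product_diff[OF s1 s2 s3 s4] unfolding K_def by simp
  have rhs: "(K has_sum 2 * (3 * (dedekind_eta \<tau>)\<^sup>2)) UNIV"
  proof (rule has_sum_int_pairs_odd)
    show "K (x + y, x - y) = 0" for x y
      unfolding K_def prod.case qterm_mult eq_iff_diff_eq_0[symmetric]
      by (rule qterm_eqI[where k = "- x"]) (simp_all add: field_simps)
    define D where "D x y = qterm (of_int x / 6 - of_int y / 6) ((2 * of_int x + 1)\<^sup>2 / 24 + (2 * of_int y + 1)\<^sup>2 / 24) \<tau>" for x y :: int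
    have "K (x + y + 1, x - y) = D x y - (- D x y)" for x y
      unfolding K_def D_def prod.case qterm_mult
      by (intro arg_cong2[where f = "(-)"] qterm_eqI[where k = 0] qterm_eq_uminusI[where k = x])
        (simp_all add: field_simps power2_eq_square)
    with has_sum_cmult_right[OF has_sum_dedekind_eta_squared_twisted[OF \<tau>], of 2]
    show "((\<lambda>(x, y). K (x + y + 1, x - y)) has_sum 2 * (3 * (dedekind_eta \<tau>)\<^sup>2)) UNIV"
      by (simp add: D_def case_prod_unfold)
  qed
  from has_sum_unique[OF lhs rhs] show ?thesis
    by simp
qed

lemma theta_2tau_div_3_eta_squared:
  assumes \<tau>: "Im \<tau> > 0"
  shows "theta3 0 (2 * \<tau> / 3) * theta2 (1/3) (2 * \<tau> / 3) + theta2 0 (2 * \<tau> / 3) * theta3 (1/3) (2 * \<tau> / 3)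
    = 3 * (dedekind_eta \<tau>)\<^sup>2"
proof -
  define D where "D = (\<lambda>(u::int, v::int).
    qterm (of_int u / 6 - of_int v / 6) ((2 * of_int u + 1)\<^sup>2 / 24 + (2 * of_int v + 1)\<^sup>2 / 24) \<tau>)"
  have "(D has_sum theta2 0 (2 * \<tau> / 3) * theta3 (1/3) (2 * \<tau> / 3) + theta3 0 (2 * \<tau> / 3) * theta2 (1/3) (2 * \<tau> / 3)) UNIV"
  proof (rule has_sum_int_pairs_parity_split)
    have s1: "((\<lambda>n. qterm 0 ((of_int n + 1/2)\<^sup>2 / 3) \<tau>) has_sum theta2 0 (2 * \<tau> / 3)) UNIV"
      by (rule has_sum_theta2[OF \<tau>, where c = "2/3" and u = 0 and v = 0]) (simp_all add: field_simps)
    have s2: "((\<lambda>n. qterm (of_int n / 3) (of_int n ^ 2 / 3) \<tau>) has_sum theta3 (1/3) (2 * \<tau> / 3)) UNIV"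
      by (rule has_sum_theta3[OF \<tau>, where c = "2/3" and u = "1/3" and v = 0]) (simp_all add: field_simps)
    have "D (x + y, x - y) = qterm 0 ((of_int x + 1/2)\<^sup>2 / 3) \<tau> * qterm (of_int y / 3) (of_int y ^ 2 / 3) \<tau>" for x y
      unfolding D_def prod.case qterm_mult
      by (rule qterm_eqI[where k = 0]) (simp_all add: field_simps power2_eq_square)
    with has_sum_product[OF s1 s2]
    show "((\<lambda>(x, y). D (x + y, x - y)) has_sum theta2 0 (2 * \<tau> / 3) * theta3 (1/3) (2 * \<tau> / 3)) UNIV"
      by (simp add: case_prod_unfold)
    have "((\<lambda>n. qterm 0 (of_int n ^ 2 / 3) \<tau>) has_sum theta3 0 (2 * \<tau> / 3)) UNIV"
      by (rule has_sum_theta3[OF \<tau>, where c = "2/3" and u = 0 and v = 0]) (simp_all add: field_simps)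
    then have s3: "((\<lambda>n. qterm 0 ((of_int n + 1)\<^sup>2 / 3) \<tau>) has_sum theta3 0 (2 * \<tau> / 3)) UNIV"
      by (subst has_sum_reindex_bij_witness[where j = "\<lambda>n. n + 1" and i = "\<lambda>n. n - 1"]) auto
    have s4: "((\<lambda>n. qterm ((of_int n + 1/2) / 3) ((of_int n + 1/2)\<^sup>2 / 3) \<tau>) has_sum theta2 (1/3) (2 * \<tau> / 3)) UNIV"
      by (rule has_sum_theta2[OF \<tau>, where c = "2/3" and u = "1/3" and v = 0]) (simp_all add: field_simps)
    have "D (x + y + 1, x - y) = qterm 0 ((of_int x + 1)\<^sup>2 / 3) \<tau> * qterm ((of_int y + 1/2) / 3) ((of_int y + 1/2)\<^sup>2 / 3) \<tau>" for x y
      unfolding D_def prod.case qterm_mult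
      by (rule qterm_eqI[where k = 0]) (simp_all add: field_simps power2_eq_square)
    with has_sum_product[OF s3 s4]
    show "((\<lambda>(x, y). D (x + y + 1, x - y)) has_sum theta3 0 (2 * \<tau> / 3) * theta2 (1/3) (2 * \<tau> / 3)) UNIV"
      by (simp add: case_prod_unfold)
  qed
  from has_sum_unique[OF this has_sum_dedekind_eta_squared_twisted[OF \<tau>, folded D_def]] show ?thesis
    by (simp only: add.commute)
qed

lemma theta_3tau_div_2_eta_squared:
  assumes \<tau>: "Im \<tau> > 0"
  shows "theta3 0 (3 * \<tau> / 2) * theta4 \<tau> (3 * \<tau> / 2) - theta4 0 (3 * \<tau> / 2) * theta3 \<tau> (3 * \<tau> / 2)
    = -2 * qpow (-1/3) \<tau> * (dedekind_eta \<tau>)\<^sup>2"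
proof -
  have s1: "((\<lambda>n. qterm 0 (3/4 * of_int n ^ 2) \<tau>) has_sum theta3 0 (3 * \<tau> / 2)) UNIV"
    by (rule has_sum_theta3[OF \<tau>, where c = "3/2" and u = 0 and v = 0]) (simp_all add: field_simps)
  have s2: "((\<lambda>n. qterm (of_int n / 2) (3/4 * of_int n ^ 2 + of_int n) \<tau>) has_sum theta4 \<tau> (3 * \<tau> / 2)) UNIV"
    by (rule has_sum_theta4[OF \<tau>, where c = "3/2" and u = 0 and v = 1]) (simp_all add: field_simps)
  have s3: "((\<lambda>n. qterm (of_int n / 2) (3/4 * of_int n ^ 2) \<tau>) has_sum theta4 0 (3 * \<tau> / 2)) UNIV"
    by (rule has_sum_theta4[OF \<tau>, where c = "3/2" and u = 0 and v = 0]) (simp_all add: field_simps)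
  have s4: "((\<lambda>n. qterm 0 (3/4 * of_int n ^ 2 + of_int n) \<tau>) has_sum theta3 \<tau> (3 * \<tau> / 2)) UNIV"
    by (rule has_sum_theta3[OF \<tau>, where c = "3/2" and u = 0 and v = 1]) (simp_all add: field_simps)
  define K where "K = (\<lambda>(n, m). qterm 0 (3/4 * of_int n ^ 2) \<tau> * qterm (of_int m / 2) (3/4 * of_int m ^ 2 + of_int m) \<tau>
    - qterm (of_int n / 2) (3/4 * of_int n ^ 2) \<tau> * qterm 0 (3/4 * of_int m ^ 2 + of_int m) \<tau>)"
  have lhs: "(K has_sum theta3 0 (3 * \<tau> / 2) * theta4 \<tau> (3 * \<tau> / 2) - theta4 0 (3 * \<tau> / 2) * theta3 \<tau> (3 * \<tau> / 2)) UNIV"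
    using has_sum_product_diff[OF s1 s2 s3 s4] unfolding K_def by simp
  have rhs: "(K has_sum -2 * qpow (-1/3) \<tau> * (dedekind_eta \<tau>)\<^sup>2) UNIV"
  proof (rule has_sum_int_pairs_odd)
    show "K (x + y, x - y) = 0" for x y
      unfolding K_def prod.case qterm_mult eq_iff_diff_eq_0[symmetric]
      by (rule qterm_eqI[where k = "- y"]) (simp_all add: field_simps)
    define P where "P x y = qterm (- (of_int x + 1) / 2) ((6 * of_int x + 5)\<^sup>2 / 24) \<tau> * qterm (of_int y / 2) ((6 * of_int y + 1)\<^sup>2 / 24) \<tau>"
      for x y :: int
    have "K (x + y + 1, x - y) = -2 * qpow (-1/3) \<tau> * P x y" for x y
    proof -
      define E where "E = 3/2 * of_int x ^ 2 + 3/2 * of_int y ^ 2 + 5/2 * of_int x + 1/2 * of_int y + (3/4 :: real)"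
      have "K (x + y + 1, x - y) = qterm (of_int (x - y) / 2) E \<tau> - (- qterm (of_int (x - y) / 2) E \<tau>)"
        unfolding K_def prod.case qterm_mult
        by (intro arg_cong2[where f = "(-)"] qterm_eqI[where k = 0] qterm_eq_uminusI[where k = y])
          (simp_all add: E_def field_simps power2_eq_square)
      also have "qterm (of_int (x - y) / 2) E \<tau> = - (qpow (-1/3) \<tau> * P x y)"
        unfolding P_def qterm_mult qpow_mult_qterm
        by (rule qterm_eq_uminusI[where k = "x - y"]) (simp_all add: E_def field_simps power2_eq_square)
      finally show ?thesis
        by simp
    qed
    with has_sum_cmult_right[OF has_sum_product[OF has_sum_dedekind_eta_reflected[OF \<tau>] has_sum_dedekind_eta[OF \<tau>]],
        of "-2 * qpow (-1/3) \<tau>"]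
    show "((\<lambda>(x, y). K (x + y + 1, x - y)) has_sum -2 * qpow (-1/3) \<tau> * (dedekind_eta \<tau>)\<^sup>2) UNIV"
      by (simp add: P_def power2_eq_square case_prod_unfold)
  qed
  from has_sum_unique[OF lhs rhs] show ?thesis
    by simp
qed

theorem lemma130:
  fixes \<tau> :: complex
  assumes "Im \<tau> > 0"
  shows "theta3 0 (6 * \<tau>) * theta3 \<tau> (6 * \<tau>) - theta2 0 (6 * \<tau>) * theta2 \<tau> (6 * \<tau>)
           = qpow (-1/12) \<tau> * (dedekind_eta \<tau>)^2
    \<and> theta3 0 (\<tau> / 6) * theta3 (1/6) (\<tau> / 6) - theta4 0 (\<tau> / 6) * theta4 (1/6) (\<tau> / 6)
           = 6 * (dedekind_eta \<tau>)^2
    \<and> theta3 0 (2 * \<tau> / 3) * theta2 (1/3) (2 * \<tau> / 3) + theta2 0 (2 * \<tau> / 3) * theta3 (1/3) (2 * \<tau> / 3)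
           = 3 * (dedekind_eta \<tau>)^2
    \<and> theta3 0 (3 * \<tau> / 2) * theta4 \<tau> (3 * \<tau> / 2) - theta4 0 (3 * \<tau> / 2) * theta3 \<tau> (3 * \<tau> / 2)
           = -2 * qpow (-1/3) \<tau> * (dedekind_eta \<tau>)^2"
  using theta_6tau_eta_squared[OF assms] theta_tau_div_6_eta_squared[OF assms]
    theta_2tau_div_3_eta_squared[OF assms] theta_3tau_div_2_eta_squared[OF assms]
  by blast

end
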